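(* Let $0<b<a$, set $v_\infty=a+b$ (so $a<v_\infty<2a$), and let $v_0\in(a,v_\infty)$. For $\mu\in(v_0,v_\infty)$ define $$\chi_s(\mu)=\int_{v_0}^{\mu}\frac{g(\xi)}{\sqrt{\mathcal G_s(\mu)-\mathcal G_s(\xi)}}\,d\xi .$$ Then $\chi_s(\mu)$ is finite, positive and strictly increasing on $(v_0,v_\infty)$, and $\chi_s(\mu)\to+\infty$ as $\mu\to v_\infty^-$. Consequently, for every $D_L>0$ and $\ell>0$ there is a unique $\mu^\star\in(v_0,v_\infty)$ with $\chi_s(\mu^\star)=\sqrt{2/D_L}\,\ell$.
   Context: $g(\xi)=(2a-\xi)/\xi^3$, $R_s(\xi)=\xi-a-b$, and $\mathcal G_s(\xi)=-\dfrac{a(a+b)}{\xi^2}+\dfrac{3a+b}{\xi}+\log\xi$, so that $\mathcal G_s'(\xi)=-R_s(\xi)g(\xi)$. *)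

theory Defs
  imports "HOL-Analysis.Analysis"
begin

definition g_fun :: "real \<Rightarrow> real \<Rightarrow> real" where
  "g_fun a \<xi> = (2 * a - \<xi>) / \<xi> ^ 3"

definition R_s :: "real \<Rightarrow> real \<Rightarrow> real \<Rightarrow> real" where
  "R_s a b \<xi> = \<xi> - a - b"

definition G_s :: "real \<Rightarrow> real \<Rightarrow> real \<Rightarrow> real" where
  "G_s a b \<xi> = - (a * (a + b)) / \<xi> ^ 2 + (3 * a + b) / \<xi> + ln \<xi>"

text \<open>The integrand of chi_s(mu); at the endpoint xi = mu it is 0/...=0 by
  Isabelle's convention (a single point, irrelevant for the integral).\<close>
definition chi_integrand :: "real \<Rightarrow> real \<Rightarrow> real \<Rightarrow> real \<Rightarrow> real" where
  "chi_integrand a b \<mu> \<xi> = g_fun a \<xi> / sqrt (G_s a b \<mu> - G_s a b \<xi>)"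

text \<open>Henstock-Kurzweil integral over [v0, mu] (covers the improper integral).\<close>
definition chi_s :: "real \<Rightarrow> real \<Rightarrow> real \<Rightarrow> real \<Rightarrow> real" where
  "chi_s a b v0 \<mu> = integral {v0..\<mu>} (chi_integrand a b \<mu>)"

end

theory Submission
  imports Defs "HOL-Real_Asymp.Real_Asymp"
begin

text \<open>
  Since \<open>G_s' = (a + b - \<xi>) g\<close>, the integrand is \<open>-2/(a + b - \<xi>)\<close> times the derivative of
  \<open>\<xi> \<mapsto> sqrt (G_s \<mu> - G_s \<xi>)\<close>. Integrating by parts removes the singularity at \<open>\<xi> = \<mu>\<close>:
  \<open>\<chi>_s(\<mu>)\<close> equals a boundary term plus twice the integral of the continuous, nonnegative kernel
  \<open>sqrt (G_s \<mu> - G_s \<xi>) / (a + b - \<xi>)\<^sup>2\<close>, which vanishes for \<open>\<xi> \<ge> \<mu>\<close> and increases with \<open>\<mu>\<close>.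
  This gives finiteness, positivity, strict monotonicity and continuity. Because \<open>g \<ge> c > 0\<close>
  on \<open>(0, a + b]\<close>, the gap \<open>G_s \<mu> - G_s \<xi>\<close> grows quadratically in \<open>a + b - \<xi>\<close>, so the kernel is
  at least a multiple of \<open>1 / (a + b - \<xi>)\<close> away from \<open>\<mu>\<close> and \<open>\<chi>_s\<close> diverges logarithmically at
  \<open>a + b\<close>. The intermediate value theorem then yields the solution \<open>\<mu>\<^sup>\<star>\<close>.
\<close>

lemma has_real_derivative_G_s [derivative_intros]:
  assumes "(f has_real_derivative f') (at x within S)" "f x > 0"
  shows "((\<lambda>x. G_s a b (f x)) has_real_derivative (a + b - f x) * g_fun a (f x) * f') (at x within S)"
proof -
  have "((\<lambda>x. G_s a b (f x)) has_real_derivative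
      2 * (a * (a + b)) * f x * f' / ((f x)\<^sup>2)\<^sup>2 - (3 * a + b) * f' / (f x)\<^sup>2 + f' / f x) (at x within S)"
    unfolding G_s_def using assms
    by (auto intro!: derivative_eq_intros simp: field_simps power2_eq_square)
  moreover have "2 * (a * (a + b)) * f x * f' / ((f x)\<^sup>2)\<^sup>2 - (3 * a + b) * f' / (f x)\<^sup>2 + f' / f x
      = (a + b - f x) * g_fun a (f x) * f'"
    using assms(2) unfolding g_fun_def by (simp add: field_simps power2_eq_square power3_eq_cube)
  ultimately show ?thesis by simp
qed

lemma continuous_on_G_s [continuous_intros]:
  assumes "continuous_on S f" "\<And>x. x \<in> S \<Longrightarrow> f x > 0"
  shows "continuous_on S (\<lambda>x. G_s a b (f x))"
  unfolding G_s_def using assms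
  by (auto intro!: continuous_intros) (metis less_irrefl)+

lemma g_fun_lower_bound:
  assumes "b < a" "0 < x" "x \<le> a + b"
  shows "(a - b) / (a + b) ^ 3 \<le> g_fun a x"
  unfolding g_fun_def using assms by (intro frac_le power_mono) auto

lemma G_s_strict_mono:
  assumes "b < a" "0 < x" "x < y" "y \<le> a + b"
  shows "G_s a b x < G_s a b y"
proof (rule DERIV_pos_imp_increasing_open[OF \<open>x < y\<close>])
  fix t assume t: "x < t" "t < y"
  have "0 < (a - b) / (a + b) ^ 3" using t assms by simp
  then have "0 < g_fun a t" using g_fun_lower_bound[of b a t] t assms by linarith
  then have "0 < (a + b - t) * g_fun a t * 1" using t assms by simp
  moreover have "(G_s a b has_real_derivative (a + b - t) * g_fun a t * 1) (at t)"
    using has_real_derivative_G_s[of "\<lambda>x. x" 1 t UNIV a b] t assms by auto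
  ultimately show "\<exists>d. (G_s a b has_real_derivative d) (at t) \<and> 0 < d" by blast
next
  show "continuous_on {x..y} (G_s a b)"
    using continuous_on_G_s[of "{x..y}" "\<lambda>x. x" a b] assms by (auto intro: continuous_on_id)
qed

lemma G_s_mono:
  "b < a \<Longrightarrow> 0 < x \<Longrightarrow> x \<le> y \<Longrightarrow> y \<le> a + b \<Longrightarrow> G_s a b x \<le> G_s a b y"
  using G_s_strict_mono[of b a x y] by (cases "x = y") auto

text \<open>\<open>G_s\<close> has slope at least \<open>c (a + b - \<xi>)\<close>, hence a quadratic gap below \<open>a + b\<close>.\<close>

lemma G_s_quadratic_growth:
  assumes "b < a" "0 < \<xi>" "\<xi> \<le> \<mu>" "\<mu> \<le> a + b"
  shows "(a - b) / (a + b) ^ 3 / 2 * ((a + b - \<xi>)\<^sup>2 - (a + b - \<mu>)\<^sup>2) \<le> G_s a b \<mu> - G_s a b \<xi>"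
proof -
  define c where "c = (a - b) / (a + b) ^ 3"
  define Q where "Q x = G_s a b x + c / 2 * (a + b - x)\<^sup>2" for x
  have "Q \<xi> \<le> Q \<mu>"
  proof (rule DERIV_nonneg_imp_increasing_open[OF \<open>\<xi> \<le> \<mu>\<close>])
    fix t assume t: "\<xi> < t" "t < \<mu>"
    have "(Q has_real_derivative (a + b - t) * g_fun a t * 1 + c / 2 * (2 * (a + b - t) * (0 - 1))) (at t)"
      unfolding Q_def using t assms by (auto intro!: derivative_eq_intros)
    moreover have "(a + b - t) * g_fun a t * 1 + c / 2 * (2 * (a + b - t) * (0 - 1))
        = (a + b - t) * (g_fun a t - c)"
      by (simp add: algebra_simps)
    moreover have "0 \<le> (a + b - t) * (g_fun a t - c)"
      using g_fun_lower_bound[of b a t] t assms unfolding c_def by auto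
    ultimately show "\<exists>d. (Q has_real_derivative d) (at t) \<and> 0 \<le> d" by metis
  next
    show "continuous_on {\<xi>..\<mu>} Q" unfolding Q_def using assms
      by (intro continuous_intros) auto
  qed
  then show ?thesis unfolding Q_def c_def by (simp add: algebra_simps)
qed

text \<open>The kernel left after integrating \<open>chi_integrand\<close> by parts; \<open>max 0\<close> extends it
  continuously by \<open>0\<close> to \<open>\<xi> \<ge> \<mu>\<close>.\<close>

definition chi_parts_kernel :: "real \<Rightarrow> real \<Rightarrow> real \<Rightarrow> real \<Rightarrow> real" where
  "chi_parts_kernel a b \<mu> \<xi> = sqrt (max 0 (G_s a b \<mu> - G_s a b \<xi>)) / (a + b - \<xi>)\<^sup>2"

context
  fixes a b v0 :: real
  assumes b_less_a: "b < a" and v0_pos: "0 < v0" and v0_less: "v0 < a + b"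
begin

lemma chi_parts_kernel_nonneg: "0 \<le> chi_parts_kernel a b \<mu> \<xi>"
  unfolding chi_parts_kernel_def by simp

lemma chi_parts_kernel_eq_0:
  "v0 \<le> \<mu> \<Longrightarrow> \<mu> \<le> \<xi> \<Longrightarrow> \<xi> \<le> a + b \<Longrightarrow> chi_parts_kernel a b \<mu> \<xi> = 0"
  unfolding chi_parts_kernel_def using G_s_mono[of b a \<mu> \<xi>] b_less_a v0_pos by auto

lemma chi_parts_kernel_mono:
  "v0 \<le> \<mu> \<Longrightarrow> \<mu> \<le> \<mu>' \<Longrightarrow> \<mu>' \<le> a + b \<Longrightarrow> chi_parts_kernel a b \<mu> \<xi> \<le> chi_parts_kernel a b \<mu>' \<xi>"
  unfolding chi_parts_kernel_def using G_s_mono[of b a \<mu> \<mu>'] b_less_a v0_pos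
  by (intro divide_right_mono real_sqrt_le_mono) auto

lemma continuous_on_chi_parts_kernel_param:
  "M < a + b \<Longrightarrow> continuous_on ({v0..M} \<times> {v0..M}) (\<lambda>(\<mu>, \<xi>). chi_parts_kernel a b \<mu> \<xi>)"
  unfolding chi_parts_kernel_def case_prod_beta using v0_pos
  by (intro continuous_intros) auto

lemma continuous_on_chi_parts_kernel:
  "M < a + b \<Longrightarrow> continuous_on {v0..M} (chi_parts_kernel a b \<mu>)"
  unfolding chi_parts_kernel_def using v0_pos by (intro continuous_intros) auto

lemma chi_parts_kernel_integrable:
  "M < a + b \<Longrightarrow> chi_parts_kernel a b \<mu> integrable_on {v0..M}"
  using continuous_on_chi_parts_kernel integrable_continuous_real by blast

lemma chi_integrand_has_integral_by_parts:
  assumes "v0 < \<mu>" "\<mu> < a + b"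
  shows "(chi_integrand a b \<mu> has_integral
     2 * sqrt (G_s a b \<mu> - G_s a b v0) / (a + b - v0)
       + 2 * integral {v0..\<mu>} (chi_parts_kernel a b \<mu>)) {v0..\<mu>}"
proof -
  let ?K = "chi_parts_kernel a b \<mu>"
  define \<Phi> where "\<Phi> \<xi> = -2 * sqrt (G_s a b \<mu> - G_s a b \<xi>) / (a + b - \<xi>) + 2 * integral {v0..\<xi>} ?K" for \<xi>
  have cont_K: "continuous_on {v0..\<mu>} ?K" using continuous_on_chi_parts_kernel assms by simp
  have "continuous_on {v0..\<mu>} \<Phi>"
    unfolding \<Phi>_def using assms v0_pos
    by (intro continuous_intros indefinite_integral_continuous_1 integrable_continuous_real cont_K) auto
  moreover have "(\<Phi> has_vector_derivative chi_integrand a b \<mu> \<xi>) (at \<xi>)" if \<xi>: "\<xi> \<in> {v0<..<\<mu>}" for \<xi>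
  proof -
    define s where "s = sqrt (G_s a b \<mu> - G_s a b \<xi>)"
    have "G_s a b \<xi> < G_s a b \<mu>" using G_s_strict_mono[of b a \<xi> \<mu>] \<xi> assms b_less_a v0_pos by auto
    then have s: "0 < s" "G_s a b \<mu> = G_s a b \<xi> + s\<^sup>2" unfolding s_def by auto
    have \<xi>_bounds: "0 < a + b - \<xi>" "0 < \<xi>" using \<xi> assms v0_pos by auto
    have "((\<lambda>\<xi>. -2 * sqrt (G_s a b \<mu> - G_s a b \<xi>) / (a + b - \<xi>)) has_real_derivative
        g_fun a \<xi> / s - 2 * s / (a + b - \<xi>)\<^sup>2) (at \<xi>)"
      unfolding s(2) using s \<xi>_bounds
      by (auto intro!: derivative_eq_intros) (simp add: divide_simps, simp add: algebra_simps power2_eq_square)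
    moreover have "((\<lambda>\<xi>. integral {v0..\<xi>} ?K) has_real_derivative ?K \<xi>) (at \<xi>)"
      using integral_has_real_derivative[OF cont_K, of \<xi>] \<xi> at_within_Icc_at[of v0 \<xi> \<mu>] by auto
    ultimately have "(\<Phi> has_real_derivative g_fun a \<xi> / s - 2 * s / (a + b - \<xi>)\<^sup>2 + 2 * ?K \<xi>) (at \<xi>)"
      unfolding \<Phi>_def by (intro derivative_intros DERIV_cmult)
    moreover have "g_fun a \<xi> / s - 2 * s / (a + b - \<xi>)\<^sup>2 + 2 * ?K \<xi> = chi_integrand a b \<mu> \<xi>"
      using s unfolding chi_parts_kernel_def chi_integrand_def s_def by simp
    ultimately show ?thesis by (simp add: has_real_derivative_iff_has_vector_derivative)
  qed
  ultimately have "(chi_integrand a b \<mu> has_integral \<Phi> \<mu> - \<Phi> v0) {v0..\<mu>}"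
    using assms by (intro fundamental_theorem_of_calculus_interior) auto
  then show ?thesis unfolding \<Phi>_def by (simp add: add.commute)
qed

lemma chi_integrand_integrable:
  "v0 < \<mu> \<Longrightarrow> \<mu> < a + b \<Longrightarrow> chi_integrand a b \<mu> integrable_on {v0..\<mu>}"
  using chi_integrand_has_integral_by_parts by blast

text \<open>Since the kernel vanishes beyond \<open>\<mu>\<close>, the interval of integration can be frozen to any
  \<open>[v0, M]\<close> with \<open>\<mu> \<le> M\<close>; this is what makes \<open>\<chi>_s\<close> comparable and continuous in \<open>\<mu>\<close>.\<close>

lemma chi_s_eq_by_parts:
  assumes "v0 < \<mu>" "\<mu> \<le> M" "M < a + b"
  shows "chi_s a b v0 \<mu> = 2 * sqrt (G_s a b \<mu> - G_s a b v0) / (a + b - v0)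
      + 2 * integral {v0..M} (chi_parts_kernel a b \<mu>)"
proof -
  have "integral {\<mu>..M} (chi_parts_kernel a b \<mu>) = integral {\<mu>..M} (\<lambda>_. 0)"
    by (rule integral_cong) (use chi_parts_kernel_eq_0 assms in auto)
  then have "integral {v0..\<mu>} (chi_parts_kernel a b \<mu>) = integral {v0..M} (chi_parts_kernel a b \<mu>)"
    using Henstock_Kurzweil_Integration.integral_combine[of v0 \<mu> M "chi_parts_kernel a b \<mu>"]
      chi_parts_kernel_integrable[OF assms(3)] assms by simp
  then show ?thesis
    using chi_integrand_has_integral_by_parts[of \<mu>] assms unfolding chi_s_def
    by (simp add: integral_unique)
qed

lemma chi_s_pos:
  assumes "v0 < \<mu>" "\<mu> < a + b"
  shows "0 < chi_s a b v0 \<mu>"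
proof -
  have "0 < 2 * sqrt (G_s a b \<mu> - G_s a b v0) / (a + b - v0)"
    using G_s_strict_mono[of b a v0 \<mu>] assms b_less_a v0_pos by (intro divide_pos_pos) auto
  moreover have "0 \<le> integral {v0..\<mu>} (chi_parts_kernel a b \<mu>)"
    using chi_parts_kernel_integrable assms chi_parts_kernel_nonneg by (intro integral_nonneg) auto
  ultimately show ?thesis using chi_s_eq_by_parts[of \<mu> \<mu>] assms by simp
qed

lemma chi_s_strict_mono: "strict_mono_on {v0<..<a + b} (chi_s a b v0)"
proof (rule strict_mono_onI)
  fix \<mu> \<mu>' assume \<mu>: "\<mu> \<in> {v0<..<a + b}" "\<mu>' \<in> {v0<..<a + b}" "\<mu> < \<mu>'"
  have "G_s a b \<mu> < G_s a b \<mu>'" using G_s_strict_mono b_less_a v0_pos \<mu> by auto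
  then have "2 * sqrt (G_s a b \<mu> - G_s a b v0) / (a + b - v0) < 2 * sqrt (G_s a b \<mu>' - G_s a b v0) / (a + b - v0)"
    using v0_less by (intro divide_strict_right_mono) auto
  moreover have "integral {v0..\<mu>'} (chi_parts_kernel a b \<mu>) \<le> integral {v0..\<mu>'} (chi_parts_kernel a b \<mu>')"
    using chi_parts_kernel_integrable chi_parts_kernel_mono \<mu> by (intro integral_le) auto
  ultimately show "chi_s a b v0 \<mu> < chi_s a b v0 \<mu>'"
    using chi_s_eq_by_parts[of \<mu> \<mu>'] chi_s_eq_by_parts[of \<mu>' \<mu>'] \<mu> by simp
qed

lemma chi_parts_kernel_lower_bound:
  assumes "v0 \<le> \<xi>" "2 * (a + b - \<mu>) \<le> a + b - \<xi>" "\<mu> < a + b"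
  shows "sqrt ((a - b) / (a + b) ^ 3 / 8) / (a + b - \<xi>) \<le> chi_parts_kernel a b \<mu> \<xi>"
proof -
  define c where "c = (a - b) / (a + b) ^ 3"
  define t where "t = a + b - \<xi>"
  have t: "0 < t" "a + b - \<mu> \<le> t / 2" using assms unfolding t_def by auto
  have "c / 8 * t\<^sup>2 \<le> c / 2 * (t\<^sup>2 - (a + b - \<mu>)\<^sup>2)"
  proof -
    have "(a + b - \<mu>)\<^sup>2 \<le> t\<^sup>2 / 4"
      using t assms power_mono[of "a + b - \<mu>" "t / 2" 2] by (simp add: power_divide)
    then have "t\<^sup>2 / 4 \<le> t\<^sup>2 - (a + b - \<mu>)\<^sup>2" using zero_le_power2[of t] by linarith
    moreover have "0 \<le> c" unfolding c_def using b_less_a v0_pos v0_less by auto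
    ultimately have "c / 2 * (t\<^sup>2 / 4) \<le> c / 2 * (t\<^sup>2 - (a + b - \<mu>)\<^sup>2)" by (intro mult_left_mono) auto
    then show ?thesis by simp
  qed
  also have "\<dots> \<le> G_s a b \<mu> - G_s a b \<xi>"
    using G_s_quadratic_growth[of b a \<xi> \<mu>] assms b_less_a v0_pos unfolding c_def t_def by auto
  finally have "sqrt (c / 8) * t \<le> sqrt (max 0 (G_s a b \<mu> - G_s a b \<xi>))"
    using t by (metis real_sqrt_le_mono max.coboundedI2 real_sqrt_abs real_sqrt_mult abs_of_pos)
  then have "sqrt (c / 8) * t / t\<^sup>2 \<le> chi_parts_kernel a b \<mu> \<xi>"
    unfolding chi_parts_kernel_def t_def by (intro divide_right_mono) auto
  then show ?thesis using t unfolding c_def t_def by (simp add: power2_eq_square)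
qed

lemma chi_s_logarithmic_lower_bound:
  assumes "v0 + a + b \<le> 2 * \<mu>" "\<mu> < a + b"
  defines "\<kappa> \<equiv> sqrt ((a - b) / (a + b) ^ 3 / 8)"
  shows "2 * \<kappa> * (ln (a + b - v0) - ln (2 * (a + b - \<mu>))) \<le> chi_s a b v0 \<mu>"
proof -
  define m where "m = 2 * \<mu> - (a + b)"
  have m: "v0 \<le> m" "m \<le> \<mu>" "a + b - m = 2 * (a + b - \<mu>)" using assms unfolding m_def by auto
  have log_integral: "((\<lambda>\<xi>. \<kappa> / (a + b - \<xi>)) has_integral - \<kappa> * ln (a + b - m) - - \<kappa> * ln (a + b - v0)) {v0..m}"
  proof (rule fundamental_theorem_of_calculus_interior)
    show "continuous_on {v0..m} (\<lambda>\<xi>. - \<kappa> * ln (a + b - \<xi>))"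
      using m assms by (intro continuous_intros) auto
    fix x assume "x \<in> {v0<..<m}"
    then have "0 < a + b - x" using m assms by auto
    then show "((\<lambda>\<xi>. - \<kappa> * ln (a + b - \<xi>)) has_vector_derivative \<kappa> / (a + b - x)) (at x)"
      unfolding has_real_derivative_iff_has_vector_derivative[symmetric]
      by (auto intro!: derivative_eq_intros simp: field_simps)
  qed (use m in simp)
  then have "\<kappa> * (ln (a + b - v0) - ln (2 * (a + b - \<mu>))) = integral {v0..m} (\<lambda>\<xi>. \<kappa> / (a + b - \<xi>))"
    using m by (simp add: integral_unique algebra_simps)
  also have "\<dots> \<le> integral {v0..m} (chi_parts_kernel a b \<mu>)"
    using chi_parts_kernel_lower_bound[of _ \<mu>] log_integral chi_parts_kernel_integrable[of m \<mu>] m assms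
    by (intro integral_le) (auto simp: m_def)
  also have "\<dots> \<le> integral {v0..\<mu>} (chi_parts_kernel a b \<mu>)"
    using chi_parts_kernel_integrable[of m \<mu>] chi_parts_kernel_integrable[of \<mu> \<mu>]
      chi_parts_kernel_nonneg m(1,2) assms
    by (intro integral_subset_le) auto
  finally have "\<kappa> * (ln (a + b - v0) - ln (2 * (a + b - \<mu>))) \<le> integral {v0..\<mu>} (chi_parts_kernel a b \<mu>)" .
  moreover have "0 \<le> 2 * sqrt (G_s a b \<mu> - G_s a b v0) / (a + b - v0)"
    using G_s_mono[of b a v0 \<mu>] b_less_a v0_pos v0_less assms by simp
  ultimately show ?thesis using chi_s_eq_by_parts[of \<mu> \<mu>] assms v0_less by simp
qed

lemma chi_s_tendsto_at_top: "filterlim (chi_s a b v0) at_top (at_left (a + b))"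
proof (rule filterlim_at_top_mono)
  define \<kappa> where "\<kappa> = sqrt ((a - b) / (a + b) ^ 3 / 8)"
  have "0 < \<kappa>" unfolding \<kappa>_def using b_less_a v0_pos v0_less by auto
  then show "filterlim (\<lambda>\<mu>. 2 * \<kappa> * (ln (a + b - v0) - ln (2 * (a + b - \<mu>)))) at_top (at_left (a + b))"
    by real_asymp
  show "\<forall>\<^sub>F \<mu> in at_left (a + b). 2 * \<kappa> * (ln (a + b - v0) - ln (2 * (a + b - \<mu>))) \<le> chi_s a b v0 \<mu>"
    unfolding eventually_at_left_field \<kappa>_def using v0_less chi_s_logarithmic_lower_bound
    by (intro exI[of _ "(v0 + a + b) / 2"]) auto
qed

text \<open>Intermediate value theorem for the continuous extension of \<open>\<chi>_s\<close> by \<open>0\<close> at \<open>v0\<close>.\<close>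

lemma chi_s_attains:
  assumes "0 < y"
  shows "\<exists>\<mu> \<in> {v0<..<a + b}. chi_s a b v0 \<mu> = y"
proof -
  obtain M where M: "v0 < M" "M < a + b" "y \<le> chi_s a b v0 M"
  proof -
    obtain l where l: "l < a + b" "\<And>\<mu>. l < \<mu> \<Longrightarrow> \<mu> < a + b \<Longrightarrow> y \<le> chi_s a b v0 \<mu>"
      using chi_s_tendsto_at_top unfolding filterlim_at_top eventually_at_left_field by blast
    show ?thesis
      by (rule that[of "(max l v0 + a + b) / 2"]) (use l v0_less in auto)
  qed
  define F where "F \<mu> = 2 * sqrt (G_s a b \<mu> - G_s a b v0) / (a + b - v0)
      + 2 * integral {v0..M} (chi_parts_kernel a b \<mu>)" for \<mu>
  have F_eq: "F \<mu> = chi_s a b v0 \<mu>" if "v0 < \<mu>" "\<mu> \<le> M" for \<mu>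
    unfolding F_def using chi_s_eq_by_parts that M by simp
  have "integral {v0..M} (chi_parts_kernel a b v0) = integral {v0..M} (\<lambda>_. 0)"
    by (rule integral_cong) (use chi_parts_kernel_eq_0 M in auto)
  then have "F v0 = 0" unfolding F_def by simp
  moreover have "continuous_on {v0..M} F"
  proof -
    have "continuous_on {v0..M} (\<lambda>\<mu>. integral (cbox v0 M) (chi_parts_kernel a b \<mu>))"
      using continuous_on_chi_parts_kernel_param[OF M(2)]
      by (intro integral_continuous_on_param) (simp add: cbox_interval)
    then show ?thesis
      unfolding F_def cbox_interval using v0_pos v0_less M by (intro continuous_intros) auto
  qed
  ultimately obtain \<mu> where "v0 \<le> \<mu>" "\<mu> \<le> M" "F \<mu> = y"
    using IVT'[of F v0 y M] assms M F_eq[of M] by auto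
  moreover have "\<mu> \<noteq> v0" using \<open>F v0 = 0\<close> \<open>F \<mu> = y\<close> assms by auto
  ultimately show ?thesis using F_eq M by (intro bexI[of _ \<mu>]) auto
qed

end

theorem mainTheorem5:
  fixes a b v0 :: real
  assumes "0 < b" and "b < a"
    and "a < v0" and "v0 < a + b"
  shows "(\<forall>\<mu>\<in>{v0<..<a + b}. chi_integrand a b \<mu> integrable_on {v0..\<mu>} \<and> chi_s a b v0 \<mu> > 0)
    \<and> strict_mono_on {v0<..<a + b} (chi_s a b v0)
    \<and> filterlim (chi_s a b v0) at_top (at_left (a + b))
    \<and> (\<forall>D_L ell. D_L > 0 \<longrightarrow> ell > 0 \<longrightarrow>
         (\<exists>!\<mu>. \<mu> \<in> {v0<..<a + b} \<and> chi_s a b v0 \<mu> = sqrt (2 / D_L) * ell))"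
proof -
  have v0: "b < a" "0 < v0" "v0 < a + b" using assms by auto
  note mono = chi_s_strict_mono[OF v0]
  have "\<exists>!\<mu>. \<mu> \<in> {v0<..<a + b} \<and> chi_s a b v0 \<mu> = y" if "0 < y" for y
    using chi_s_attains[OF v0 that] strict_mono_on_imp_inj_on[OF mono]
    by (auto simp: inj_on_def)
  then show ?thesis
    using chi_integrand_integrable[OF v0] chi_s_pos[OF v0] mono chi_s_tendsto_at_top[OF v0]
    by auto
qed

end
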